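(* Let $\Omega\subset\mathbb R^d$ be a bounded Borel set, $f:\Omega\to[0,\infty)$ with $\int_\Omega f=1$, $p\ge1$, $x_1,\dots,x_k\in\Omega$, and $h_1,\dots,h_k:[0,1]\to[0,\infty)$ differentiable in $]0,1]$ and continuous at $0$, with $\eta_i(t)=t\,h_i(t)$ convex. Let $(A_i)_{i=1}^k$ be a partition of $\Omega$ such that for every $i$, with $c_j=\int_{A_j}f\,dx$, $$A_i=\big\{x\in\Omega:\ |x-x_i|^p+h_i(c_i)+c_ih_i'(c_i)<|x-x_j|^p+h_j(c_j)+c_jh_j'(c_j)\ \ \forall j\ne i\big\}$$ up to $f$-negligible sets. Then $(A_i)_{i=1}^k$ is the unique optimum.
   Context: A partition of $\Omega$ is a family of Borel sets pairwise disjoint up to $f$-negligible sets whose union has full $f\,dx$-measure. An optimum is a partition $(A_i)_{i=1}^k$ minimizing $\sum_{i=1}^k\int_{A_i}[|x-x_i|^p+h_i(\int_{A_i}f)]f(x)\,dx$ over all partitions of $\Omega$ into $k$ sets. "Differentiable in $]0,1]$" means differentiable on $]0,1[$ with a left derivative at $1$; the convention $0\cdot h_i'(0)=0$ is used. *)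

theory Defs
  imports "HOL-Analysis.Analysis"
begin

definition fmeas :: "'a::euclidean_space set \<Rightarrow> ('a \<Rightarrow> real) \<Rightarrow> 'a measure" where
  "fmeas \<Omega> f = density lborel (\<lambda>x. ennreal (indicator \<Omega> x * f x))"

text \<open>Derivative of h at c in ]0,1]: the ordinary derivative for c < 1, the left derivative at 1.
  At c = 0 the value is irrelevant since it is always multiplied by c (convention 0 h'(0) = 0).\<close>
definition hder :: "(real \<Rightarrow> real) \<Rightarrow> real \<Rightarrow> real" where
  "hder h c = (if c < 1 then deriv h c else (THE D. (h has_real_derivative D) (at_left 1)))"

definition mass :: "('a::euclidean_space \<Rightarrow> real) \<Rightarrow> 'a set \<Rightarrow> real" where
  "mass f A = (LINT x:A|lborel. f x)"

definition is_partition :: "'a::euclidean_space set \<Rightarrow> ('a \<Rightarrow> real) \<Rightarrow> nat \<Rightarrow> (nat \<Rightarrow> 'a set) \<Rightarrow> bool" where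
  "is_partition \<Omega> f k A \<longleftrightarrow>
     (\<forall>i<k. A i \<in> sets borel \<and> A i \<subseteq> \<Omega>) \<and>
     (\<forall>i<k. \<forall>j<k. i \<noteq> j \<longrightarrow> emeasure (fmeas \<Omega> f) (A i \<inter> A j) = 0) \<and>
     emeasure (fmeas \<Omega> f) (\<Omega> - (\<Union>i<k. A i)) = 0"

definition cost :: "'a::euclidean_space set \<Rightarrow> ('a \<Rightarrow> real) \<Rightarrow> real \<Rightarrow> (nat \<Rightarrow> 'a) \<Rightarrow>
    (nat \<Rightarrow> real \<Rightarrow> real) \<Rightarrow> nat \<Rightarrow> (nat \<Rightarrow> 'a set) \<Rightarrow> real" where
  "cost \<Omega> f p x h k A =
     (\<Sum>i<k. LINT y:A i|lborel. (norm (y - x i) powr p + h i (mass f (A i))) * f y)"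

definition is_optimum :: "'a::euclidean_space set \<Rightarrow> ('a \<Rightarrow> real) \<Rightarrow> real \<Rightarrow> (nat \<Rightarrow> 'a) \<Rightarrow>
    (nat \<Rightarrow> real \<Rightarrow> real) \<Rightarrow> nat \<Rightarrow> (nat \<Rightarrow> 'a set) \<Rightarrow> bool" where
  "is_optimum \<Omega> f p x h k A \<longleftrightarrow> is_partition \<Omega> f k A \<and>
     (\<forall>B. is_partition \<Omega> f k B \<longrightarrow> cost \<Omega> f p x h k A \<le> cost \<Omega> f p x h k B)"

end

theory Submission
  imports Defs
begin

text \<open>Write \<open>m(B) = \<integral>\<^sub>B f\<close>, \<open>c\<^sub>i = m(A\<^sub>i)\<close> and \<open>g\<^sub>i = h\<^sub>i(c\<^sub>i) + c\<^sub>i h\<^sub>i'(c\<^sub>i)\<close>, the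
  derivative of \<open>\<eta>\<^sub>i\<close> at \<open>c\<^sub>i\<close>. Splitting off the constants \<open>g\<^sub>i\<close>, the cost of a partition \<open>B\<close> is
  the linear cost \<open>\<Sum>\<^sub>i \<integral>\<^sub>B\<^sub>i (|y - x\<^sub>i|\<^sup>p + g\<^sub>i) f(y) dy\<close> plus \<open>\<Sum>\<^sub>i \<eta>\<^sub>i(m(B\<^sub>i)) - g\<^sub>i m(B\<^sub>i)\<close>.
  By convexity \<open>\<eta>\<^sub>i\<close> lies above its tangent at \<open>c\<^sub>i\<close>, so the second sum is minimal at \<open>B = A\<close>.
  The hypothesis says that \<open>A\<close> sends almost every point to the index of strictly smallest
  price \<open>|y - x\<^sub>i|\<^sup>p + g\<^sub>i\<close>, so \<open>A\<close> minimises the linear cost pointwise, and any partition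
  with the same linear cost must coincide with \<open>A\<close> almost everywhere.\<close>

lemma convex_on_imp_above_left_tangent:
  fixes \<eta> :: "real \<Rightarrow> real"
  assumes "convex_on I \<eta>" "b \<in> I" "c \<in> I" "b < c"
    and "(\<eta> has_real_derivative D) (at_left c)"
  shows "\<eta> c + D * (b - c) \<le> \<eta> b"
proof -
  have "((\<lambda>t. (\<eta> t - \<eta> c) / (t - c)) \<longlongrightarrow> D) (at_left c)"
    using assms(5) has_field_derivative_iff by blast
  moreover have "eventually (\<lambda>t. (\<eta> b - \<eta> c) / (b - c) \<le> (\<eta> t - \<eta> c) / (t - c)) (at_left c)"
    using eventually_at_left_real[OF \<open>b < c\<close>]
    by eventually_elim (use convex_on_slope_le(2)[OF assms(1-3)] in auto)
  ultimately have "(\<eta> b - \<eta> c) / (b - c) \<le> D"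
    by (simp add: tendsto_lowerbound)
  then show ?thesis
    using \<open>b < c\<close> by (simp add: field_simps)
qed

lemma convex_on_times_id_imp_le_at_0:
  fixes h :: "real \<Rightarrow> real"
  assumes "convex_on I (\<lambda>t. t * h t)" "0 \<in> I" "b \<in> I" "0 < b"
    and "continuous (at_right 0) h"
  shows "h 0 \<le> h b"
proof -
  have "(h \<longlongrightarrow> h 0) (at_right 0)"
    using assms(5) continuous_within by blast
  moreover have "eventually (\<lambda>t. h t \<le> h b) (at_right 0)"
    using eventually_at_right_real[OF \<open>0 < b\<close>]
    by eventually_elim (use convex_on_slope_le(1)[OF assms(1-3)] in auto)
  ultimately show ?thesis
    by (simp add: tendsto_upperbound)
qed

lemma hder_eq_left_deriv_at_1:
  assumes "(h has_real_derivative D) (at_left 1)"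
  shows "hder h 1 = D"
proof -
  have "D' = D" if "(h has_real_derivative D') (at_left 1)" for D'
    using has_field_derivative_unique[OF that assms] by simp
  then have "(THE D. (h has_real_derivative D) (at_left 1)) = D"
    using assms by (rule the_equality[rotated])
  then show ?thesis by (simp add: hder_def)
qed

lemma has_real_derivative_hder:
  assumes "h differentiable (at c)" "c < 1"
  shows "(h has_real_derivative hder h c) (at c)"
  unfolding hder_def using assms DERIV_deriv_iff_real_differentiable by auto

lemma convex_on_times_id_imp_above_hder_tangent:
  fixes h :: "real \<Rightarrow> real"
  assumes cv: "convex_on {0..1} (\<lambda>t. t * h t)" and h0: "continuous (at_right 0) h"
    and diff: "\<forall>t\<in>{0<..<1}. h differentiable (at t)"
    and diff1: "\<exists>D. (h has_real_derivative D) (at_left 1)"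
    and c: "c \<in> {0..1}" and b: "b \<in> {0..1}"
  shows "c * h c + (h c + c * hder h c) * (b - c) \<le> b * h b"
proof -
  consider "c = 0" | "0 < c" "c < 1" | "c = 1" using c by fastforce
  then show ?thesis
  proof cases
    case 1
    \<comment> \<open>whatever \<open>hder h 0\<close> is, the slope is \<open>h 0\<close>, the right derivative of \<open>t * h t\<close> at 0\<close>
    show ?thesis
    proof (cases "b = 0")
      case False
      then have "h 0 \<le> h b"
        using convex_on_times_id_imp_le_at_0[OF cv _ b _ h0] b by simp
      then show ?thesis using 1 b mult_left_mono[of "h 0" "h b" b] by (simp add: mult.commute)
    next
      case True
      then show ?thesis using 1 by simp
    qed
  next
    case 2
    then have "(h has_real_derivative hder h c) (at c)"
      using has_real_derivative_hder[of h c] diff by simp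
    then have "((\<lambda>t. t * h t) has_real_derivative h c + c * hder h c) (at c)"
      by (auto intro!: derivative_eq_intros)
    then have "(h c + c * hder h c) * (b - c) \<le> b * h b - c * h c"
      using 2 by (intro convex_on_imp_above_tangent[OF cv _ _ b has_field_derivative_at_within]) auto
    then show ?thesis by simp
  next
    case 3
    obtain D where D: "(h has_real_derivative D) (at_left 1)" using diff1 by blast
    have d: "((\<lambda>t. t * h t) has_real_derivative h 1 + D) (at_left 1)"
      using D by (auto intro!: derivative_eq_intros)
    have "h 1 + (h 1 + D) * (b - 1) \<le> b * h b"
    proof (cases "b = 1")
      case False
      then show ?thesis using convex_on_imp_above_left_tangent[OF cv b _ _ d] b by simp
    qed simp
    then show ?thesis using 3 hder_eq_left_deriv_at_1[OF D] by simp
  qed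
qed

lemma sum_mass_excess_le_at_tangent_point:
  fixes h :: "nat \<Rightarrow> real \<Rightarrow> real"
  assumes "\<forall>i<k. convex_on {0..1} (\<lambda>t. t * h i t)" "\<forall>i<k. continuous (at_right 0) (h i)"
    and "\<forall>i<k. \<forall>t\<in>{0<..<1}. h i differentiable (at t)"
    and "\<forall>i<k. \<exists>D. (h i has_real_derivative D) (at_left 1)"
    and "\<forall>i<k. c i \<in> {0..1}" "\<forall>i<k. m i \<in> {0..1}"
  defines "g \<equiv> \<lambda>i. h i (c i) + c i * hder (h i) (c i)"
  shows "(\<Sum>i<k. (h i (c i) - g i) * c i) \<le> (\<Sum>i<k. (h i (m i) - g i) * m i)"
proof (rule sum_mono)
  fix i assume "i \<in> {..<k}"
  then have "c i * h i (c i) + g i * (m i - c i) \<le> m i * h i (m i)"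
    unfolding g_def using assms(1-6) by (intro convex_on_times_id_imp_above_hder_tangent) auto
  then show "(h i (c i) - g i) * c i \<le> (h i (m i) - g i) * m i"
    by (simp add: algebra_simps)
qed

lemma bounded_norm_diff_powr:
  fixes S :: "'a::real_normed_vector set"
  assumes "bounded S" "0 \<le> p"
  shows "bounded ((\<lambda>y. norm (y - z) powr p) ` S)"
proof -
  obtain R where R: "\<And>y. y \<in> S \<Longrightarrow> norm y \<le> R"
    using assms(1) bounded_iff by blast
  have "norm (norm (y - z) powr p) \<le> (R + norm z) powr p" if "y \<in> S" for y
    using norm_triangle_ineq4[of y z] R[OF that] assms(2) by (simp add: powr_mono2)
  then show ?thesis
    unfolding bounded_iff by blast
qed

definition linear_cost :: "('a::euclidean_space \<Rightarrow> real) \<Rightarrow> nat \<Rightarrow> (nat \<Rightarrow> 'a \<Rightarrow> real) \<Rightarrow> (nat \<Rightarrow> 'a set) \<Rightarrow> real"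
  where "linear_cost f k \<Phi> B = (\<Sum>i<k. LINT y:B i|lborel. \<Phi> i y * f y)"

definition assignment_cost :: "nat \<Rightarrow> (nat \<Rightarrow> 'a \<Rightarrow> real) \<Rightarrow> (nat \<Rightarrow> 'a set) \<Rightarrow> 'a \<Rightarrow> real"
  where "assignment_cost k \<Phi> B y = (\<Sum>i<k. indicator (B i) y * \<Phi> i y)"

definition laguerre_cell :: "'a set \<Rightarrow> nat \<Rightarrow> (nat \<Rightarrow> 'a \<Rightarrow> real) \<Rightarrow> nat \<Rightarrow> 'a set"
  where "laguerre_cell \<Omega> k \<Phi> i = {y \<in> \<Omega>. \<forall>j<k. j \<noteq> i \<longrightarrow> \<Phi> i y < \<Phi> j y}"

lemma assignment_cost_eq:
  assumes "j < k" "y \<in> B j" "\<forall>i<k. y \<in> B i \<longrightarrow> i = j"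
  shows "assignment_cost k \<Phi> B y = \<Phi> j y"
proof -
  have "y \<notin> B i" if "i < k" "i \<noteq> j" for i
    using assms(3) that by blast
  then have "indicator (B i) y * \<Phi> i y = (if i = j then \<Phi> j y else 0)" if "i \<in> {..<k}" for i
    using assms(2) that by simp
  then have "assignment_cost k \<Phi> B y = (\<Sum>i<k. if i = j then \<Phi> j y else 0)"
    unfolding assignment_cost_def by (rule sum.cong[OF refl])
  then show ?thesis
    using assms(1) by simp
qed

lemma laguerre_cell_borel:
  assumes "\<Omega> \<in> sets borel" "\<And>i. i < k \<Longrightarrow> \<Phi> i \<in> borel_measurable borel" "i < k"
  shows "laguerre_cell \<Omega> k \<Phi> i \<in> sets borel"
proof -
  have "{y \<in> space borel. \<forall>j\<in>{..<k}. j \<noteq> i \<longrightarrow> \<Phi> i y < \<Phi> j y} \<in> sets borel"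
  proof (rule sets.sets_Collect_finite_All)
    fix j assume "j \<in> {..<k}"
    then have [measurable]: "\<Phi> i \<in> borel_measurable borel" "\<Phi> j \<in> borel_measurable borel"
      using assms by auto
    show "{y \<in> space borel. j \<noteq> i \<longrightarrow> \<Phi> i y < \<Phi> j y} \<in> sets borel"
      by measurable
  qed simp
  then have "\<Omega> \<inter> {y \<in> space borel. \<forall>j\<in>{..<k}. j \<noteq> i \<longrightarrow> \<Phi> i y < \<Phi> j y} \<in> sets borel"
    using assms(1) by blast
  moreover have "laguerre_cell \<Omega> k \<Phi> i = \<Omega> \<inter> {y \<in> space borel. \<forall>j\<in>{..<k}. j \<noteq> i \<longrightarrow> \<Phi> i y < \<Phi> j y}"
    by (auto simp: laguerre_cell_def)
  ultimately show ?thesis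
    by simp
qed

locale weighted_domain =
  fixes \<Omega> :: "'a::euclidean_space set" and f :: "'a \<Rightarrow> real"
  assumes \<Omega>_borel [measurable]: "\<Omega> \<in> sets borel"
    and f_nonneg: "\<And>y. y \<in> \<Omega> \<Longrightarrow> 0 \<le> f y"
    and f_integrable: "set_integrable lborel \<Omega> f"
begin

definition \<rho> :: "'a \<Rightarrow> real" where "\<rho> = (\<lambda>y. indicator \<Omega> y * f y)"

lemma fmeas_eq_density_rho: "fmeas \<Omega> f = density lborel (\<lambda>y. ennreal (\<rho> y))"
  by (simp add: fmeas_def \<rho>_def)

lemma rho_nonneg: "0 \<le> \<rho> y"
  using f_nonneg by (simp add: \<rho>_def indicator_def)

lemma rho_integrable: "integrable lborel \<rho>"
  using f_integrable by (simp add: set_integrable_def \<rho>_def)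

lemma rho_measurable [measurable]: "\<rho> \<in> borel_measurable borel"
  using borel_measurable_integrable[OF rho_integrable] by simp

lemma in_domain_if_rho_nonzero: "\<rho> y \<noteq> 0 \<Longrightarrow> y \<in> \<Omega>"
  by (auto simp: \<rho>_def indicator_def)

lemma fmeas_eq_0_iff:
  assumes [measurable]: "S \<in> sets borel"
  shows "emeasure (fmeas \<Omega> f) S = 0 \<longleftrightarrow> (AE y in lborel. y \<in> S \<longrightarrow> \<rho> y = 0)"
proof -
  have "emeasure (fmeas \<Omega> f) S = (\<integral>\<^sup>+ y. ennreal (\<rho> y) * indicator S y \<partial>lborel)"
    unfolding fmeas_eq_density_rho by (rule emeasure_density) auto
  also have "\<dots> = 0 \<longleftrightarrow> (AE y in lborel. ennreal (\<rho> y) * indicator S y = 0)"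
    by (rule nn_integral_0_iff_AE) simp
  also have "(\<lambda>y. ennreal (\<rho> y) * indicator S y = 0) = (\<lambda>y. y \<in> S \<longrightarrow> \<rho> y = 0)"
    using rho_nonneg by (auto simp: indicator_def fun_eq_iff)
  finally show ?thesis .
qed

lemma AE_partition_unique_cell:
  assumes "is_partition \<Omega> f k B"
  shows "AE y in lborel. \<rho> y \<noteq> 0 \<longrightarrow> (\<exists>j<k. y \<in> B j \<and> (\<forall>i<k. y \<in> B i \<longrightarrow> i = j))"
proof -
  have B_borel: "\<And>i. i < k \<Longrightarrow> B i \<in> sets borel"
    using assms by (simp add: is_partition_def)
  have "AE y in lborel. \<forall>i\<in>{..<k}. \<forall>j\<in>{..<k}. y \<in> B i \<inter> B j \<longrightarrow> \<rho> y = 0 \<or> i = j"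
  proof (intro eventually_ball_finite ballI finite_lessThan)
    fix i j assume "i \<in> {..<k}" "j \<in> {..<k}"
    then show "AE y in lborel. y \<in> B i \<inter> B j \<longrightarrow> \<rho> y = 0 \<or> i = j"
      using assms fmeas_eq_0_iff[of "B i \<inter> B j"] B_borel
      by (cases "i = j") (auto simp: is_partition_def)
  qed
  moreover have "AE y in lborel. y \<in> \<Omega> - (\<Union>i<k. B i) \<longrightarrow> \<rho> y = 0"
    using assms fmeas_eq_0_iff[of "\<Omega> - (\<Union>i<k. B i)"] B_borel
    by (auto simp: is_partition_def)
  ultimately show ?thesis
  proof eventually_elim
    case (elim y)
    show ?case
    proof
      assume "\<rho> y \<noteq> 0"
      moreover obtain j where "j < k" "y \<in> B j"
        using elim \<open>\<rho> y \<noteq> 0\<close> in_domain_if_rho_nonzero by force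
      ultimately show "\<exists>j<k. y \<in> B j \<and> (\<forall>i<k. y \<in> B i \<longrightarrow> i = j)"
        using elim by blast
    qed
  qed
qed

lemma integrable_indicator_mult_rho:
  assumes [measurable]: "T \<in> sets borel" "u \<in> borel_measurable borel" and "bounded (u ` \<Omega>)"
  shows "integrable lborel (\<lambda>y. indicator T y * u y * \<rho> y)"
proof -
  obtain C where C: "\<And>y. y \<in> \<Omega> \<Longrightarrow> \<bar>u y\<bar> \<le> C"
    using assms(3) by (auto simp: bounded_iff)
  show ?thesis
  proof (rule Bochner_Integration.integrable_bound)
    show "integrable lborel (\<lambda>y. C * \<rho> y)"
      using rho_integrable by simp
    show "(\<lambda>y. indicator T y * u y * \<rho> y) \<in> borel_measurable lborel"
      by simp
    show "AE y in lborel. norm (indicator T y * u y * \<rho> y) \<le> norm (C * \<rho> y)"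
    proof (rule AE_I2)
      fix y
      show "norm (indicator T y * u y * \<rho> y) \<le> norm (C * \<rho> y)"
      proof (cases "\<rho> y = 0")
        case False
        then have "\<bar>u y\<bar> \<le> C"
          using C in_domain_if_rho_nonzero by blast
        then have "\<bar>indicator T y * u y\<bar> \<le> \<bar>C\<bar>"
          by (cases "y \<in> T") auto
        then have "\<bar>indicator T y * u y\<bar> * \<rho> y \<le> \<bar>C\<bar> * \<rho> y"
          using rho_nonneg[of y] by (rule mult_right_mono)
        then show ?thesis
          using rho_nonneg[of y] by (simp add: abs_mult)
      qed simp
    qed
  qed
qed

lemma set_integral_eq_integral_rho:
  assumes "T \<subseteq> \<Omega>"
  shows "(LINT y:T|lborel. u y * f y) = (\<integral>y. indicator T y * u y * \<rho> y \<partial>lborel)"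
  unfolding set_lebesgue_integral_def using assms
  by (intro Bochner_Integration.integral_cong) (auto simp: \<rho>_def indicator_def)

lemma mass_eq_integral_rho:
  "T \<subseteq> \<Omega> \<Longrightarrow> mass f T = (\<integral>y. indicator T y * \<rho> y \<partial>lborel)"
  using set_integral_eq_integral_rho[of T "\<lambda>_. 1"] by (simp add: mass_def)

lemma integrable_indicator_rho: "T \<in> sets borel \<Longrightarrow> integrable lborel (\<lambda>y. indicator T y * \<rho> y)"
  using integrable_indicator_mult_rho[of T "\<lambda>_. 1"] by (simp add: image_constant_conv)

lemma mass_bounds:
  assumes "T \<in> sets borel" "T \<subseteq> \<Omega>"
  shows "0 \<le> mass f T" "mass f T \<le> mass f \<Omega>"
proof -
  show "0 \<le> mass f T"
    unfolding mass_eq_integral_rho[OF assms(2)] using rho_nonneg by simp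
  show "mass f T \<le> mass f \<Omega>"
    unfolding mass_eq_integral_rho[OF assms(2)] mass_eq_integral_rho[OF order_refl]
    using assms rho_nonneg
    by (intro integral_mono integrable_indicator_rho) (auto simp: indicator_def)
qed

lemma set_integral_add_const:
  assumes [measurable]: "T \<in> sets borel" "u \<in> borel_measurable borel"
    and "T \<subseteq> \<Omega>" "bounded (u ` \<Omega>)"
  shows "(LINT y:T|lborel. (u y + a) * f y) = (LINT y:T|lborel. u y * f y) + a * mass f T"
proof -
  have "(LINT y:T|lborel. (u y + a) * f y) = (\<integral>y. indicator T y * (u y + a) * \<rho> y \<partial>lborel)"
    by (rule set_integral_eq_integral_rho[OF assms(3)])
  also have "\<dots> = (\<integral>y. indicator T y * u y * \<rho> y + a * (indicator T y * \<rho> y) \<partial>lborel)"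
    by (simp add: algebra_simps)
  also have "\<dots> = (\<integral>y. indicator T y * u y * \<rho> y \<partial>lborel) + a * (\<integral>y. indicator T y * \<rho> y \<partial>lborel)"
    using assms by (simp add: integrable_indicator_mult_rho integrable_indicator_rho)
  finally show ?thesis
    using set_integral_eq_integral_rho[OF assms(3)] mass_eq_integral_rho[OF assms(3)] by simp
qed

lemma cost_eq_linear_cost:
  assumes "bounded \<Omega>" "0 \<le> p" "is_partition \<Omega> f k B"
  shows "cost \<Omega> f p x h k B = linear_cost f k (\<lambda>i y. norm (y - x i) powr p + a i) B
    + (\<Sum>i<k. (h i (mass f (B i)) - a i) * mass f (B i))"
proof -
  have "(LINT y:B i|lborel. (norm (y - x i) powr p + h i (mass f (B i))) * f y)
      = (LINT y:B i|lborel. (norm (y - x i) powr p + a i) * f y) + (h i (mass f (B i)) - a i) * mass f (B i)"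
    if "i < k" for i
  proof -
    have B: "B i \<in> sets borel" "B i \<subseteq> \<Omega>"
      using assms(3) that by (auto simp: is_partition_def)
    have "(\<lambda>y. norm (y - x i) powr p) \<in> borel_measurable borel"
      by measurable
    note split = set_integral_add_const[OF B(1) this B(2) bounded_norm_diff_powr[OF assms(1,2)]]
    show ?thesis
      using split[where a = "h i (mass f (B i))"] split[where a = "a i"] by (simp add: left_diff_distrib)
  qed
  then show ?thesis
    unfolding cost_def linear_cost_def by (simp add: sum.distrib[symmetric])
qed

context
  fixes k :: nat and \<Phi> :: "nat \<Rightarrow> 'a \<Rightarrow> real"
  assumes \<Phi>_measurable: "\<And>i. i < k \<Longrightarrow> \<Phi> i \<in> borel_measurable borel"
    and \<Phi>_bounded: "\<And>i. i < k \<Longrightarrow> bounded (\<Phi> i ` \<Omega>)"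
begin

lemma linear_cost_has_integral:
  assumes "is_partition \<Omega> f k B"
  shows "has_bochner_integral lborel (\<lambda>y. assignment_cost k \<Phi> B y * \<rho> y) (linear_cost f k \<Phi> B)"
proof -
  have "has_bochner_integral lborel (\<lambda>y. \<Sum>i<k. indicator (B i) y * \<Phi> i y * \<rho> y) (linear_cost f k \<Phi> B)"
    unfolding linear_cost_def
  proof (rule has_bochner_integral_sum)
    fix i assume "i \<in> {..<k}"
    then have "B i \<in> sets borel" "B i \<subseteq> \<Omega>" "\<Phi> i \<in> borel_measurable borel" "bounded (\<Phi> i ` \<Omega>)"
      using assms \<Phi>_measurable \<Phi>_bounded by (auto simp: is_partition_def)
    then show "has_bochner_integral lborel (\<lambda>y. indicator (B i) y * \<Phi> i y * \<rho> y) (LINT y:B i|lborel. \<Phi> i y * f y)"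
      using has_bochner_integral_integrable[OF integrable_indicator_mult_rho]
      by (simp add: set_integral_eq_integral_rho)
  qed
  then show ?thesis
    by (simp only: assignment_cost_def sum_distrib_right)
qed

context
  fixes A :: "nat \<Rightarrow> 'a set"
  assumes A_partition: "is_partition \<Omega> f k A"
    and A_cells: "\<forall>i<k. emeasure (fmeas \<Omega> f) (sym_diff (A i) (laguerre_cell \<Omega> k \<Phi> i)) = 0"
begin

lemma AE_laguerre_cell:
  "AE y in lborel. \<rho> y \<noteq> 0 \<longrightarrow> (\<forall>i<k. y \<in> A i \<longleftrightarrow> y \<in> laguerre_cell \<Omega> k \<Phi> i)"
proof -
  have "AE y in lborel. \<forall>i\<in>{..<k}. y \<in> sym_diff (A i) (laguerre_cell \<Omega> k \<Phi> i) \<longrightarrow> \<rho> y = 0"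
  proof (intro eventually_ball_finite ballI finite_lessThan)
    fix i assume "i \<in> {..<k}"
    moreover have "sym_diff (A i) (laguerre_cell \<Omega> k \<Phi> i) \<in> sets borel"
      using A_partition laguerre_cell_borel[of \<Omega> k \<Phi> i] \<Omega>_borel \<Phi>_measurable \<open>i \<in> {..<k}\<close>
      by (auto simp: is_partition_def)
    ultimately show "AE y in lborel. y \<in> sym_diff (A i) (laguerre_cell \<Omega> k \<Phi> i) \<longrightarrow> \<rho> y = 0"
      using A_cells fmeas_eq_0_iff by auto
  qed
  then show ?thesis
    by eventually_elim auto
qed

lemma AE_assignment_cost_le:
  assumes "is_partition \<Omega> f k B"
  shows "AE y in lborel. \<rho> y \<noteq> 0 \<longrightarrow> assignment_cost k \<Phi> A y \<le> assignment_cost k \<Phi> B y \<and>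
    (assignment_cost k \<Phi> A y = assignment_cost k \<Phi> B y \<longrightarrow> (\<forall>i<k. y \<in> A i \<longleftrightarrow> y \<in> B i))"
  using AE_partition_unique_cell[OF A_partition] AE_partition_unique_cell[OF assms] AE_laguerre_cell
proof eventually_elim
  case (elim y)
  show ?case
  proof
    assume "\<rho> y \<noteq> 0"
    then obtain a b where a: "a < k" "y \<in> A a" "\<forall>i<k. y \<in> A i \<longrightarrow> i = a"
      and b: "b < k" "y \<in> B b" "\<forall>i<k. y \<in> B i \<longrightarrow> i = b" and "y \<in> laguerre_cell \<Omega> k \<Phi> a"
      using elim by blast
    have cost_A: "assignment_cost k \<Phi> A y = \<Phi> a y" and cost_B: "assignment_cost k \<Phi> B y = \<Phi> b y"
      using assignment_cost_eq[OF a] assignment_cost_eq[OF b] .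
    show "assignment_cost k \<Phi> A y \<le> assignment_cost k \<Phi> B y \<and>
      (assignment_cost k \<Phi> A y = assignment_cost k \<Phi> B y \<longrightarrow> (\<forall>i<k. y \<in> A i \<longleftrightarrow> y \<in> B i))"
    proof (cases "a = b")
      case True
      then have "\<forall>i<k. y \<in> A i \<longleftrightarrow> y \<in> B i"
        using a b by blast
      then show ?thesis
        using cost_A cost_B True by simp
    next
      case False
      then have "\<Phi> a y < \<Phi> b y"
        using \<open>y \<in> laguerre_cell \<Omega> k \<Phi> a\<close> b(1) by (simp add: laguerre_cell_def)
      then show ?thesis
        using cost_A cost_B by simp
    qed
  qed
qed

lemma linear_cost_le_of_laguerre_cells:
  assumes "is_partition \<Omega> f k B"
  shows "linear_cost f k \<Phi> A \<le> linear_cost f k \<Phi> B"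
proof -
  note hA = linear_cost_has_integral[OF A_partition] and hB = linear_cost_has_integral[OF assms]
  have "AE y in lborel. assignment_cost k \<Phi> A y * \<rho> y \<le> assignment_cost k \<Phi> B y * \<rho> y"
    using AE_assignment_cost_le[OF assms]
    by eventually_elim (use rho_nonneg in \<open>auto intro: mult_right_mono\<close>)
  then show ?thesis
    using integral_mono_AE[OF integrable.intros[OF hA] integrable.intros[OF hB]]
    by (simp add: has_bochner_integral_integral_eq[OF hA] has_bochner_integral_integral_eq[OF hB])
qed

lemma ae_eq_of_linear_cost_le:
  assumes "is_partition \<Omega> f k B" "linear_cost f k \<Phi> B \<le> linear_cost f k \<Phi> A"
  shows "\<forall>i<k. emeasure (fmeas \<Omega> f) (sym_diff (A i) (B i)) = 0"
proof -
  define D where "D y = assignment_cost k \<Phi> B y * \<rho> y - assignment_cost k \<Phi> A y * \<rho> y" for y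
  have hD: "has_bochner_integral lborel D (linear_cost f k \<Phi> B - linear_cost f k \<Phi> A)"
    unfolding D_def
    using linear_cost_has_integral[OF assms(1)] linear_cost_has_integral[OF A_partition]
    by (rule has_bochner_integral_diff)
  have D_nonneg: "AE y in lborel. 0 \<le> D y"
    using AE_assignment_cost_le[OF assms(1)]
    by eventually_elim (use rho_nonneg in \<open>auto simp: D_def intro: mult_right_mono\<close>)
  have "integral\<^sup>L lborel D = 0"
    using has_bochner_integral_integral_eq[OF hD] assms(2)
      linear_cost_le_of_laguerre_cells[OF assms(1)] by simp
  then have "AE y in lborel. D y = 0"
    using integral_nonneg_eq_0_iff_AE[OF integrable.intros[OF hD] D_nonneg] by simp
  then have "AE y in lborel. \<rho> y \<noteq> 0 \<longrightarrow> (\<forall>i<k. y \<in> A i \<longleftrightarrow> y \<in> B i)"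
    using AE_assignment_cost_le[OF assms(1)] by eventually_elim (auto simp: D_def)
  moreover have "sym_diff (A i) (B i) \<in> sets borel" if "i < k" for i
    using A_partition assms(1) that by (intro sets.Un sets.Diff) (auto simp: is_partition_def)
  ultimately show ?thesis
    by (auto simp: fmeas_eq_0_iff elim!: eventually_mono)
qed

end

end

end

theorem proposition3p7:
  fixes \<Omega> :: "'a::euclidean_space set" and f :: "'a \<Rightarrow> real" and p :: real
    and k :: nat and x :: "nat \<Rightarrow> 'a" and h :: "nat \<Rightarrow> real \<Rightarrow> real" and A :: "nat \<Rightarrow> 'a set"
  assumes \<Omega>_borel: "\<Omega> \<in> sets borel" and \<Omega>_bdd: "bounded \<Omega>"
    and f_nonneg: "\<forall>y\<in>\<Omega>. f y \<ge> 0"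
    and f_int: "set_integrable lborel \<Omega> f" and f_one: "(LINT y:\<Omega>|lborel. f y) = 1"
    and p: "p \<ge> 1"
    and x_in: "\<forall>i<k. x i \<in> \<Omega>"
    and h_nonneg: "\<forall>i<k. \<forall>t\<in>{0..1}. h i t \<ge> 0"
    and h_diff: "\<forall>i<k. \<forall>t\<in>{0<..<1}. h i differentiable (at t)"
    and h_diff1: "\<forall>i<k. \<exists>D. (h i has_real_derivative D) (at_left 1)"
    and h_cont0: "\<forall>i<k. continuous (at_right 0) (h i)"
    and eta_convex: "\<forall>i<k. convex_on {0..1} (\<lambda>t. t * h i t)"
    and A_part: "is_partition \<Omega> f k A"
    and A_char: "\<forall>i<k. emeasure (fmeas \<Omega> f)
        (sym_diff (A i) {y \<in> \<Omega>. \<forall>j<k. j \<noteq> i \<longrightarrow>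
            norm (y - x i) powr p + h i (mass f (A i)) + mass f (A i) * hder (h i) (mass f (A i))
          < norm (y - x j) powr p + h j (mass f (A j)) + mass f (A j) * hder (h j) (mass f (A j))}) = 0"
  shows "is_optimum \<Omega> f p x h k A \<and>
    (\<forall>B. is_optimum \<Omega> f p x h k B \<longrightarrow>
       (\<forall>i<k. emeasure (fmeas \<Omega> f) (sym_diff (A i) (B i)) = 0))"
proof -
  interpret weighted_domain \<Omega> f
    using \<Omega>_borel f_nonneg f_int by unfold_locales auto
  define c where "c i = mass f (A i)" for i
  define g where "g i = h i (c i) + c i * hder (h i) (c i)" for i
  define \<Phi> where "\<Phi> i y = norm (y - x i) powr p + g i" for i y
  define E where "E B = (\<Sum>i<k. (h i (mass f (B i)) - g i) * mass f (B i))" for B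
  have \<Phi>: "\<Phi> i \<in> borel_measurable borel" "bounded (\<Phi> i ` \<Omega>)" for i
    unfolding \<Phi>_def using bounded_norm_diff_powr[OF \<Omega>_bdd] p
    by (auto intro!: bounded_plus_comp simp: image_constant_conv)
  have cells: "\<forall>i<k. emeasure (fmeas \<Omega> f) (sym_diff (A i) (laguerre_cell \<Omega> k \<Phi> i)) = 0"
    using A_char by (simp add: laguerre_cell_def \<Phi>_def g_def c_def add.assoc)
  note linear_le = linear_cost_le_of_laguerre_cells[OF \<Phi> A_part cells]
  note linear_ae = ae_eq_of_linear_cost_le[OF \<Phi> A_part cells]
  have cost_split: "cost \<Omega> f p x h k B = linear_cost f k \<Phi> B + E B" if "is_partition \<Omega> f k B" for B
    using cost_eq_linear_cost[OF \<Omega>_bdd _ that] p unfolding \<Phi>_def E_def by simp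
  have mass_unit: "\<forall>i<k. mass f (B i) \<in> {0..1}" if "is_partition \<Omega> f k B" for B
    using that mass_bounds f_one by (auto simp: is_partition_def mass_def)
  have E_min: "E A \<le> E B" if "is_partition \<Omega> f k B" for B
    using sum_mass_excess_le_at_tangent_point[OF eta_convex h_cont0 h_diff h_diff1
        mass_unit[OF A_part] mass_unit[OF that]]
    unfolding E_def g_def c_def .
  have "is_optimum \<Omega> f p x h k A"
    unfolding is_optimum_def
  proof (intro conjI allI impI A_part)
    fix B assume B: "is_partition \<Omega> f k B"
    show "cost \<Omega> f p x h k A \<le> cost \<Omega> f p x h k B"
      using cost_split[OF A_part] cost_split[OF B] linear_le[OF B] E_min[OF B] by linarith
  qed
  moreover have "\<forall>i<k. emeasure (fmeas \<Omega> f) (sym_diff (A i) (B i)) = 0"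
    if "is_optimum \<Omega> f p x h k B" for B
  proof -
    have B: "is_partition \<Omega> f k B" "cost \<Omega> f p x h k B \<le> cost \<Omega> f p x h k A"
      using that A_part by (auto simp: is_optimum_def)
    then have "linear_cost f k \<Phi> B \<le> linear_cost f k \<Phi> A"
      using cost_split[OF A_part] cost_split[OF B(1)] E_min[OF B(1)] by linarith
    then show ?thesis
      using linear_ae[OF B(1)] by blast
  qed
  ultimately show ?thesis
    by blast
qed

end
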